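(* Let $L$ be a semiregular Lagrangian density. Then all multimomentum Hamiltonian forms associated with $L$ coincide on the Lagrangian constraint space $Q=\widehat L(J^1Y)$: $H|_Q=H'|_Q$. Moreover, the Poincaré–Cartan form of $L$ is the pullback $\Xi_L=\widehat L^*H$ of any associated multimomentum Hamiltonian form $H=p^\lambda_idy^i\wedge\omega_\lambda-\mathcal H\omega$ by the Legendre morphism; in coordinates, $\pi^\lambda_iy^i_\lambda-\mathcal L=\mathcal H(x^\mu,y^i,\pi^\lambda_i)$.
   Context: Let $\pi:Y\to X$ be a fibred manifold over an $n$-dimensional manifold $X$, fibred coordinates $(x^\lambda,y^i)$, $\omega=dx^1\wedge\dots\wedge dx^n$, $\omega_\lambda=\partial_\lambda\rfloor\omega$. $J^1Y$ has coordinates $(x^\lambda,y^i,y^i_\lambda)$. A Lagrangian density is $L=\mathcal L(x,y,y_\mu)\omega$, $\pi^\lambda_i=\partial\mathcal L/\partial y^i_\lambda$; its Poincaré–Cartan form is $\Xi_L=\pi^\lambda_idy^i\wedge\omega_\lambda+(\mathcal L-\pi^\lambda_iy^i_\lambda)\omega$. The Legendre bundle $\Pi=\wedge^nT^*X\otimes_YTX\otimes_YV^*Y\to Y$ has coordinates $(x^\lambda,y^i,p^\lambda_i)$, $\partial^i_\lambda=\partial/\partial p^\lambda_i$. The Legendre morphism $\widehat L:J^1Y\to\Pi$ is $p^\lambda_i\circ\widehat L=\pi^\lambda_i$, $Q=\widehat L(J^1Y)$. $L$ is semiregular if for every $q\in Q$ the preimage $\widehat L^{-1}(q)$ is a connected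 submanifold of $J^1Y$. A multimomentum Hamiltonian form is an $n$-form $H$ on $\Pi$, locally $p^\lambda_idy^i\wedge\omega_\lambda-\mathcal H\omega$, such that locally some jet field $\gamma=dx^\lambda\otimes(\partial_\lambda+\gamma^i_{(\lambda)}\partial_i+\gamma^\mu_{i\lambda}\partial^i_\mu)$ of $\Pi\to X$ satisfies $\gamma\rfloor(dp^\lambda_i\wedge dy^i\wedge\omega\otimes\partial_\lambda)=dH$; its momentum morphism is $y^i_\lambda\circ\widehat H=\partial^i_\lambda\mathcal H$. For a bundle morphism $\Phi:\Pi\to J^1Y$ over $Y$ put $H_\Phi=p^\lambda_idy^i\wedge\omega_\lambda-p^\lambda_i\Phi^i_\lambda\omega$. $H$ is associated with $L$ if $\widehat L\circ\widehat H|_Q=\mathrm{Id}_Q$ and $H=H_{\widehat H}+L\circ\widehat H$, where $L\circ\widehat H=\mathcal L(x,y,\partial^j_\lambda\mathcal H)\omega$. *)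

theory Defs
  imports "HOL-Analysis.Analysis"
begin

text \<open>Local fibred coordinates: x in R^n (index type 'n), y in R^m (index type 'm).
  A point of J^1Y is a triple (x, y, v) with v $ l $ i = y^i_l; a point of the Legendre
  bundle is a triple (x, y, p) with p $ l $ i = p^l_i.  The coordinate domain of Y is an
  open set U of pairs (x, y); the fibres of J^1Y and of Pi over Y are the whole of R^(nm).\<close>

type_synonym ('n, 'm) pt = "(real^'n) \<times> (real^'m) \<times> (real^'m^'n)"

coinductive smooth_fun :: "'a::euclidean_space set \<Rightarrow> ('a \<Rightarrow> real) \<Rightarrow> bool" for S where
  "\<lbrakk> \<forall>z\<in>S. f differentiable (at z);
     \<forall>b\<in>Basis. smooth_fun S (\<lambda>z. frechet_derivative f (at z) b) \<rbrakk> \<Longrightarrow> smooth_fun S f"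

definition submanifold :: "'a::euclidean_space set \<Rightarrow> bool" where
  "submanifold S \<longleftrightarrow>
     (\<forall>a\<in>S. \<exists>W (\<phi>::'a \<Rightarrow> 'a) \<psi> B. open W \<and> a \<in> W \<and> open (\<phi> ` W) \<and> B \<subseteq> Basis \<and>
        (\<forall>b\<in>Basis. smooth_fun W (\<lambda>z. \<phi> z \<bullet> b)) \<and>
        (\<forall>b\<in>Basis. smooth_fun (\<phi> ` W) (\<lambda>z. \<psi> z \<bullet> b)) \<and>
        (\<forall>z\<in>W. \<psi> (\<phi> z) = z) \<and>
        \<phi> ` (W \<inter> S) = \<phi> ` W \<inter> {z. \<forall>b\<in>B. z \<bullet> b = 0})"

definition jet_dir :: "'n::finite \<Rightarrow> 'm::finite \<Rightarrow> real^'m^'n" where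
  "jet_dir l i = (\<chi> \<mu> j. if \<mu> = l \<and> j = i then 1 else 0)"

text \<open>Derivatives with respect to the fibre coordinates y^i_l (resp. p^l_i):
  fibre_grad F x y w $ l $ i = dF/dw^l_i at (x,y,w).\<close>
definition fibre_grad :: "(('n::finite, 'm::finite) pt \<Rightarrow> real) \<Rightarrow> real^'n \<Rightarrow> real^'m \<Rightarrow> real^'m^'n \<Rightarrow> real^'m^'n" where
  "fibre_grad F x y w = (\<chi> l i. frechet_derivative F (at (x, y, w)) (0, 0, jet_dir l i))"

definition partial_y :: "(('n::finite, 'm::finite) pt \<Rightarrow> real) \<Rightarrow> real^'n \<Rightarrow> real^'m \<Rightarrow> real^'m^'n \<Rightarrow> 'm \<Rightarrow> real" where
  "partial_y F x y w i = frechet_derivative F (at (x, y, w)) (0, axis i 1, 0)"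

definition fdom :: "((real^'n) \<times> (real^'m)) set \<Rightarrow> ('n::finite, 'm::finite) pt set" where
  "fdom U = {(x, y, w). (x, y) \<in> U}"

definition legendre :: "(('n::finite, 'm::finite) pt \<Rightarrow> real) \<Rightarrow> ('n, 'm) pt \<Rightarrow> ('n, 'm) pt" where
  "legendre L z = (case z of (x, y, v) \<Rightarrow> (x, y, fibre_grad L x y v))"

definition momentum :: "(('n::finite, 'm::finite) pt \<Rightarrow> real) \<Rightarrow> ('n, 'm) pt \<Rightarrow> ('n, 'm) pt" where
  "momentum H z = (case z of (x, y, p) \<Rightarrow> (x, y, fibre_grad H x y p))"

definition pairing :: "real^'m^'n \<Rightarrow> real^'m^'n \<Rightarrow> real" where
  "pairing p v = (\<Sum>l\<in>UNIV. \<Sum>i\<in>UNIV. p $ l $ i * v $ l $ i)"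

text \<open>Lagrangian density L = \<L> omega on the coordinate domain.\<close>
definition lagrangian :: "((real^'n) \<times> (real^'m)) set \<Rightarrow> (('n::finite, 'm::finite) pt \<Rightarrow> real) \<Rightarrow> bool" where
  "lagrangian U L \<longleftrightarrow> open U \<and> smooth_fun (fdom U) L"

definition semiregular :: "((real^'n) \<times> (real^'m)) set \<Rightarrow> (('n::finite, 'm::finite) pt \<Rightarrow> real) \<Rightarrow> bool" where
  "semiregular U L \<longleftrightarrow>
     (\<forall>q \<in> legendre L ` fdom U.
        connected (fdom U \<inter> legendre L -` {q}) \<and> submanifold (fdom U \<inter> legendre L -` {q}))"

text \<open>Multimomentum Hamiltonian form H = p^l_i dy^i \<and> omega_l - \<H> omega, given by its
  Hamiltonian function \<H> on the coordinate domain of Pi: a jet field gamma of Pi \<rightarrow> X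
  with gamma \<rfloor> (dp \<and> dy \<and> omega \<otimes> \<partial>) = dH exists, i.e. there are smooth components
  gamma^i_(l) = \<partial>^i_l \<H> and gamma^mu_(i l) with sum_l gamma^l_(i l) = - \<partial>_i \<H>.\<close>
definition mm_hamiltonian :: "((real^'n) \<times> (real^'m)) set \<Rightarrow> (('n::finite, 'm::finite) pt \<Rightarrow> real) \<Rightarrow> bool" where
  "mm_hamiltonian U H \<longleftrightarrow> smooth_fun (fdom U) H \<and>
     (\<exists>(g1 :: ('n, 'm) pt \<Rightarrow> real^'m^'n) (g2 :: ('n, 'm) pt \<Rightarrow> 'n \<Rightarrow> 'm \<Rightarrow> 'n \<Rightarrow> real).
        (\<forall>l i. smooth_fun (fdom U) (\<lambda>z. g1 z $ l $ i)) \<and>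
        (\<forall>\<mu> i l. smooth_fun (fdom U) (\<lambda>z. g2 z \<mu> i l)) \<and>
        (\<forall>(x, y, p) \<in> fdom U. g1 (x, y, p) = fibre_grad H x y p \<and>
           (\<forall>i. (\<Sum>l\<in>UNIV. g2 (x, y, p) l i l) = - partial_y H x y p i)))"

text \<open>H is associated with L:  legendre o momentum = Id on Q, and
  H = H_{momentum} + L o momentum, i.e. \<H> = p^l_i \<partial>^i_l \<H> - \<L>(x, y, \<partial> \<H>).\<close>
definition associated :: "((real^'n) \<times> (real^'m)) set \<Rightarrow> (('n::finite, 'm::finite) pt \<Rightarrow> real) \<Rightarrow> (('n, 'm) pt \<Rightarrow> real) \<Rightarrow> bool" where
  "associated U H L \<longleftrightarrow>
     (\<forall>q \<in> legendre L ` fdom U. legendre L (momentum H q) = q) \<and>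
     (\<forall>(x, y, p) \<in> fdom U.
        H (x, y, p) = pairing p (fibre_grad H x y p) - L (x, y, fibre_grad H x y p))"

end

theory Submission
  imports Defs
begin

text \<open>On the fibre of the Legendre map over a point (x, y, P) of Q, the energy
  P v - L(x, y, v) has vanishing fibre derivative, since there P is the fibre derivative of L.
  Pulled back to a convex slice chart it is therefore locally constant, hence constant on the
  fibre because the fibre is a connected submanifold.  An associated Hamiltonian takes at
  (x, y, P) the value of this energy at the jet given by its momentum morphism, and that jet lies
  in the fibre over (x, y, P); so it equals the energy at every jet over (x, y, P), whichever
  associated Hamiltonian is taken.\<close>

lemma smooth_fun_imp_differentiable:
  "smooth_fun S f \<Longrightarrow> z \<in> S \<Longrightarrow> f differentiable (at z)"
  by (erule smooth_fun.cases) auto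

lemma smooth_components_imp_differentiable:
  assumes "\<forall>b\<in>Basis. smooth_fun S (\<lambda>z. (\<phi> z :: 'b::euclidean_space) \<bullet> b)" and "z \<in> S"
  shows "\<phi> differentiable (at z)"
  using assms smooth_fun_imp_differentiable differentiable_componentwise_within[of \<phi> z UNIV]
  by blast

lemma smooth_components_imp_continuous_on:
  assumes "\<forall>b\<in>Basis. smooth_fun S (\<lambda>z. (\<phi> z :: 'b::euclidean_space) \<bullet> b)"
  shows "continuous_on S \<phi>"
  using smooth_components_imp_differentiable[OF assms] differentiable_imp_continuous_within
  by (metis continuous_at_imp_continuous_on)

lemma submanifold_convex_parametrization:
  fixes S :: "'a::euclidean_space set"
  assumes "submanifold S" and "a \<in> S"
  obtains T and C :: "'a set" and \<psi> where "openin (top_of_set S) T" "a \<in> T" "convex C"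
    "T \<subseteq> \<psi> ` C" "\<psi> ` C \<subseteq> S" "\<And>z. z \<in> C \<Longrightarrow> \<psi> differentiable (at z)"
proof -
  obtain W and \<phi> :: "'a \<Rightarrow> 'a" and \<psi> B where W: "open W" "a \<in> W" "open (\<phi> ` W)"
    and \<phi>: "\<forall>b\<in>Basis. smooth_fun W (\<lambda>z. \<phi> z \<bullet> b)"
    and \<psi>: "\<forall>b\<in>Basis. smooth_fun (\<phi> ` W) (\<lambda>z. \<psi> z \<bullet> b)"
    and inv: "\<forall>z\<in>W. \<psi> (\<phi> z) = z"
    and slice: "\<phi> ` (W \<inter> S) = \<phi> ` W \<inter> {z. \<forall>b\<in>B. z \<bullet> b = 0}"
    using bspec[OF assms(1)[unfolded submanifold_def] assms(2)] by (elim exE conjE) blast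
  obtain r where r: "r > 0" "ball (\<phi> a) r \<subseteq> \<phi> ` W"
    using W open_contains_ball by blast
  define C where "C = ball (\<phi> a) r \<inter> {z. \<forall>b\<in>B. z \<bullet> b = 0}"
  define T where "T = S \<inter> (W \<inter> \<phi> -` ball (\<phi> a) r)"
  show thesis
  proof
    have "open (W \<inter> \<phi> -` ball (\<phi> a) r)"
      using continuous_open_preimage[OF smooth_components_imp_continuous_on[OF \<phi>] W(1)] by simp
    then show "openin (top_of_set S) T"
      unfolding T_def by (rule openin_open_Int)
    show "a \<in> T"
      using assms(2) W(2) r(1) by (simp add: T_def)
    show "convex C"
      unfolding C_def
      by (rule convex_Int[OF convex_ball]) (auto simp: convex_def inner_add_left)
    show "T \<subseteq> \<psi> ` C"
    proof
      fix s assume s: "s \<in> T"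
      then have "\<phi> s \<in> \<phi> ` (W \<inter> S)"
        unfolding T_def by blast
      then have "\<phi> s \<in> C"
        using s slice unfolding T_def C_def by auto
      moreover have "\<psi> (\<phi> s) = s"
        using s inv unfolding T_def by blast
      ultimately show "s \<in> \<psi> ` C"
        by (metis imageI)
    qed
    have C_W: "C \<subseteq> \<phi> ` W"
      using r(2) unfolding C_def by blast
    show "\<psi> ` C \<subseteq> S"
    proof
      fix z assume "z \<in> \<psi> ` C"
      then obtain c where "c \<in> C" and z: "z = \<psi> c" by blast
      then have "c \<in> \<phi> ` W \<inter> {z. \<forall>b\<in>B. z \<bullet> b = 0}"
        using C_W unfolding C_def by blast
      then have "c \<in> \<phi> ` (W \<inter> S)"
        by (simp only: slice)
      then obtain s where "s \<in> W \<inter> S" and "c = \<phi> s" by blast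
      then show "z \<in> S" using inv z by simp
    qed
    show "\<psi> differentiable (at z)" if "z \<in> C" for z
      using smooth_components_imp_differentiable[OF \<psi>] that C_W by blast
  qed
qed

lemma submanifold_zero_derivative_imp_locally_constant:
  fixes f :: "'a::euclidean_space \<Rightarrow> 'b::real_normed_vector"
  assumes "submanifold S" and "a \<in> S"
    and f': "\<And>z. z \<in> S \<Longrightarrow> (f has_derivative (\<lambda>_. 0)) (at z)"
  shows "\<exists>T. openin (top_of_set S) T \<and> a \<in> T \<and> (\<forall>z\<in>T. f z = f a)"
proof -
  obtain T and C :: "'a set" and \<psi> where T: "openin (top_of_set S) T" "a \<in> T"
    and C: "convex C" and T_C: "T \<subseteq> \<psi> ` C" and C_S: "\<psi> ` C \<subseteq> S"
    and \<psi>: "\<And>z. z \<in> C \<Longrightarrow> \<psi> differentiable (at z)"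
    using submanifold_convex_parametrization[OF assms(1,2)] by blast
  have "((f \<circ> \<psi>) has_derivative (\<lambda>_. 0)) (at z within C)" if z: "z \<in> C" for z
  proof -
    obtain D where "(\<psi> has_derivative D) (at z within C)"
      using \<psi>[OF z] differentiable_def has_derivative_at_withinI by blast
    moreover have "(f has_derivative (\<lambda>_. 0)) (at (\<psi> z))"
      using f' C_S z by blast
    ultimately show ?thesis
      using has_derivative_compose by (simp add: o_def)
  qed
  then obtain c where c: "\<forall>z\<in>C. (f \<circ> \<psi>) z = c"
    using has_derivative_zero_constant[OF C] by blast
  have "f s = c" if s: "s \<in> T" for s
  proof -
    obtain z where "z \<in> C" and "s = \<psi> z"
      using T_C s by blast
    with c show ?thesis by simp
  qed
  with T show ?thesis
    by (intro exI[of _ T]) simp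
qed

lemma connected_submanifold_zero_derivative_imp_constant:
  fixes f :: "'a::euclidean_space \<Rightarrow> 'b::real_normed_vector"
  assumes "submanifold S" and "connected S"
    and "\<And>z. z \<in> S \<Longrightarrow> (f has_derivative (\<lambda>_. 0)) (at z)"
  shows "f constant_on S"
  using assms(2) by (rule locally_constant_imp_constant)
    (rule submanifold_zero_derivative_imp_locally_constant[OF assms(1) _ assms(3)])

lemma jet_dir_expansion:
  "(e::real^'m::finite^'n::finite) = (\<Sum>l\<in>UNIV. \<Sum>i\<in>UNIV. e $ l $ i *\<^sub>R jet_dir l i)"
proof -
  have "(\<Sum>i\<in>UNIV. (e $ l $ i *\<^sub>R jet_dir l i) $ l0 $ i0) = (if l = l0 then e $ l $ i0 else 0)"
    for l l0 i0
    by (simp add: jet_dir_def if_distrib[of "\<lambda>t. _ * t"] cong: if_cong)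
  then show ?thesis
    by (simp add: vec_eq_iff sum_component)
qed

lemma linear_pairing: "linear (pairing p)"
  unfolding pairing_def
  by (auto intro!: linearI simp: sum_distrib_left algebra_simps sum.distrib)

lemma has_derivative_fibre:
  fixes L :: "('n::finite, 'm::finite) pt \<Rightarrow> real"
  assumes "L differentiable (at (x, y, u))"
  shows "((\<lambda>u. L (x, y, u)) has_derivative pairing (fibre_grad L x y u)) (at u)"
proof -
  define D where "D = frechet_derivative L (at (x, y, u))"
  have "((\<lambda>u. (x, y, u)) has_derivative (\<lambda>e. (0, 0, e))) (at u)"
    by (auto intro!: derivative_eq_intros)
  from has_derivative_compose[OF this, of L D]
  have L': "((\<lambda>u. L (x, y, u)) has_derivative (\<lambda>e. D (0, 0, e))) (at u)"
    using assms by (simp add: D_def frechet_derivative_works o_def)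
  interpret D: linear "\<lambda>e. D (0, 0, e)"
    using has_derivative_linear[OF L'] .
  have "D (0, 0, e) = pairing (fibre_grad L x y u) e" for e
  proof -
    have "D (0, 0, e) = D (0, 0, \<Sum>l\<in>UNIV. \<Sum>i\<in>UNIV. e $ l $ i *\<^sub>R jet_dir l i)"
      using jet_dir_expansion[of e] by simp
    also have "\<dots> = (\<Sum>l\<in>UNIV. \<Sum>i\<in>UNIV. e $ l $ i * D (0, 0, jet_dir l i))"
      by (simp add: D.sum D.scale)
    finally show ?thesis
      by (simp add: pairing_def fibre_grad_def D_def mult.commute)
  qed
  with L' show ?thesis
    by (simp add: fun_eq_iff)
qed

definition lagrangian_energy ::
  "(('n::finite, 'm::finite) pt \<Rightarrow> real) \<Rightarrow> real^'n \<Rightarrow> real^'m \<Rightarrow> real^'m^'n \<Rightarrow> real" where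
  "lagrangian_energy L x y v = pairing (fibre_grad L x y v) v - L (x, y, v)"

lemma lagrangian_energy_eq_on_legendre_fibre:
  fixes L :: "('n::finite, 'm::finite) pt \<Rightarrow> real"
  assumes diff: "\<forall>z\<in>fdom U. L differentiable (at z)" and semireg: "semiregular U L"
    and v: "(x, y, v) \<in> fdom U" and w: "(x, y, w) \<in> fdom U"
    and same_fibre: "fibre_grad L x y v = fibre_grad L x y w"
  shows "lagrangian_energy L x y v = lagrangian_energy L x y w"
proof -
  define P where "P = fibre_grad L x y v"
  define F where "F = fdom U \<inter> legendre L -` {(x, y, P)}"
  define f where "f = (\<lambda>z::('n, 'm) pt. pairing P (snd (snd z)) - L (x, y, snd (snd z)))"
  have vF: "(x, y, v) \<in> F" and wF: "(x, y, w) \<in> F"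
    using v w same_fibre by (simp_all add: F_def P_def legendre_def)
  have "legendre L (x, y, v) = (x, y, P)"
    by (simp add: legendre_def P_def)
  then have "(x, y, P) \<in> legendre L ` fdom U"
    using v by (metis imageI)
  then have connected: "connected F" and submanifold: "submanifold F"
    using semireg unfolding semiregular_def F_def by blast+
  have "(f has_derivative (\<lambda>_. 0)) (at z)" if "z \<in> F" for z
  proof -
    obtain u where z: "z = (x, y, u)" and u: "fibre_grad L x y u = P" "(x, y, u) \<in> fdom U"
      using \<open>z \<in> F\<close> by (cases z) (auto simp: F_def legendre_def)
    define g where "g = (\<lambda>u. pairing P u - L (x, y, u))"
    have "(g has_derivative (\<lambda>e. pairing P e - pairing P e)) (at u)"
      using has_derivative_diff[OF linear_imp_has_derivative[OF linear_pairing[of P]]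
          has_derivative_fibre[OF bspec[OF diff u(2)]]] u(1) by (simp add: g_def)
    then have g': "(g has_derivative (\<lambda>_. 0)) (at (snd (snd z)))"
      by (simp add: z)
    have "((\<lambda>z. snd (snd z)) has_derivative (\<lambda>h. snd (snd h))) (at z)"
      by (auto intro!: derivative_eq_intros)
    from has_derivative_compose[OF this g'] show ?thesis
      by (simp add: f_def g_def)
  qed
  then have "f constant_on F"
    by (rule connected_submanifold_zero_derivative_imp_constant[OF submanifold connected])
  then obtain c where "\<forall>z\<in>F. f z = c"
    unfolding constant_on_def by blast
  then have "f (x, y, v) = f (x, y, w)"
    using vF wF by simp
  then show ?thesis
    using same_fibre by (simp add: lagrangian_energy_def f_def P_def)
qed

lemma associated_hamiltonian_eq_lagrangian_energy:
  fixes L H :: "('n::finite, 'm::finite) pt \<Rightarrow> real"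
  assumes diff: "\<forall>z\<in>fdom U. L differentiable (at z)" and semireg: "semiregular U L"
    and assoc: "associated U H L" and v: "(x, y, v) \<in> fdom U"
  shows "H (x, y, fibre_grad L x y v) = lagrangian_energy L x y v"
proof -
  define P where "P = fibre_grad L x y v"
  define w where "w = fibre_grad H x y P"
  have "legendre L (x, y, v) = (x, y, P)"
    by (simp add: legendre_def P_def)
  then have "(x, y, P) \<in> legendre L ` fdom U"
    using v by (metis imageI)
  then have "legendre L (momentum H (x, y, P)) = (x, y, P)"
    using assoc unfolding associated_def by blast
  then have "legendre L (x, y, w) = (x, y, P)"
    by (simp add: momentum_def w_def)
  then have w_fibre: "fibre_grad L x y w = P"
    by (simp add: legendre_def)
  have xyw: "(x, y, w) \<in> fdom U" and xyP: "(x, y, P) \<in> fdom U"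
    using v by (simp_all add: fdom_def)
  have "\<forall>(x, y, p) \<in> fdom U. H (x, y, p) = pairing p (fibre_grad H x y p) - L (x, y, fibre_grad H x y p)"
    using assoc unfolding associated_def by blast
  from bspec[OF this xyP] have "H (x, y, P) = lagrangian_energy L x y w"
    using w_fibre by (simp add: lagrangian_energy_def w_def)
  also have "\<dots> = lagrangian_energy L x y v"
    using lagrangian_energy_eq_on_legendre_fibre[OF diff semireg xyw v] w_fibre P_def by simp
  finally show ?thesis
    by (simp add: P_def)
qed

theorem proposition16p8:
  fixes U :: "((real^'n::finite) \<times> (real^'m::finite)) set"
    and L H H' :: "('n, 'm) pt \<Rightarrow> real"
  assumes "lagrangian U L" and "semiregular U L"
    and "mm_hamiltonian U H" and "associated U H L"
    and "mm_hamiltonian U H'" and "associated U H' L"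
  shows "(\<forall>q \<in> legendre L ` fdom U. H q = H' q) \<and>
         (\<forall>(x, y, v) \<in> fdom U.
            pairing (fibre_grad L x y v) v - L (x, y, v) = H (x, y, fibre_grad L x y v))"
proof -
  have diff: "\<forall>z\<in>fdom U. L differentiable (at z)"
    using assms(1) smooth_fun_imp_differentiable unfolding lagrangian_def by blast
  note H_energy = associated_hamiltonian_eq_lagrangian_energy[OF diff assms(2) assms(4)]
  note H'_energy = associated_hamiltonian_eq_lagrangian_energy[OF diff assms(2) assms(6)]
  have "H q = H' q" if q: "q \<in> legendre L ` fdom U" for q
  proof -
    obtain z where z: "z \<in> fdom U" "q = legendre L z"
      using q by blast
    obtain x y v where "z = (x, y, v)"
      by (cases z)
    with z show ?thesis
      using H_energy H'_energy by (simp add: legendre_def)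
  qed
  moreover have "pairing (fibre_grad L x y v) v - L (x, y, v) = H (x, y, fibre_grad L x y v)"
    if "(x, y, v) \<in> fdom U" for x y v
    using H_energy[OF that] by (simp add: lagrangian_energy_def)
  ultimately show ?thesis
    by blast
qed

end
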